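(* Let $\Gamma$ and the data $s_0,\eta_0,\Xi,s_1$ be as in the context. There exist positive constants $c$ and $c'$ such that for all $\mathbf x\in\mathbb R^{n-1}$, $\gamma\in\Gamma$, $\xi\in\Xi$ with $\gamma\xi\notin P$: if $\|\mathbf x-\gamma\xi\infty\|\le c/h(\gamma\xi\infty)$ then $\mathcal G_{\mathbf x}$ enters the cusp $\gamma\xi\infty$, and if $\|\mathbf x-\gamma\xi\infty\|\le c'/h(\gamma\xi\infty)$ then $\mathcal G_{\mathbf x}$ enters the cusp $\gamma\xi\infty$ deeply.
   Context: $n\ge2$, $G=\mathrm{SO}(n,1)$, $K\cong\mathrm{SO}(n)$ maximal compact. $A=\{a(t)\}$ a one-parameter $\mathbb R$-split torus with $\mathfrak g=\mathfrak g_{-1}\oplus\mathfrak z(A)\oplus\mathfrak g_{+1}$, $\mathrm{Ad}(a(t))=e^{\pm t}$ on $\mathfrak g_{\pm1}$; $M=Z_G(A)\cap K$, $N=\exp\mathfrak g_{+1}$, $\mathfrak g_{+1}\cong\mathbb R^{n-1}$ with $\mathrm{Ad}(M)$-invariant Euclidean norm, $u(\mathbf x)=\exp\mathbf x$; $\sigma\in K$ with $\sigma^2=e$, $\sigma a(t)\sigma^{-1}=a(-t)$; $P=MAN$. Each $g\in G\setminus P$ is $g=u(\mathbf x)\sigma ma(r)u(\mathbf y)$ with $\mathbf x,r$ unique; $\partial\mathbb H^n\cong\mathbb R^{n-1}\cup\{\infty\}$ via $u(\mathbf x)\sigma P\mapsto\mathbf x$, $P\mapsto\infty$. $A_s=\{a(t):t\ge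 s\}$, $\Omega(\eta,s)=\eta A_sK$. $\Gamma$ discrete, finite covolume, $\Gamma\backslash\mathbb H^n$ non-compact, with fixed $s_0>0$, compact $\eta_0\subset N$, finite $\Xi\ni e$ satisfying: (i) $G=\Gamma\Xi\Omega(\eta_0,s_0)$; (ii) $\Gamma\cap\xi N\xi^{-1}$ cocompact in $\xi N\xi^{-1}$; (iii) for compact $\eta$, $\{\gamma:\gamma\Xi\Omega(\eta,s_0)\cap\Omega(\eta,s_0)\ne\emptyset\}$ finite; (iv) for compact $\eta\supseteq\eta_0$ there is $s_1>s_0$ with $\gamma\xi_1\Omega(\eta,s_0)\cap\xi_2\Omega(\eta,s_1)\ne\emptyset\Rightarrow\xi_1=\xi_2,\gamma\in\xi_1NM\xi_1^{-1}$; $s_1$ denotes this number for $\eta=\eta_0$. Height: for $\gamma\xi=u(\mathbf x_1)\sigma ma(r)u(\mathbf y)$, $\gamma\xi\infty=\mathbf x_1$, $h(\gamma\xi\infty)=e^r$. $\mathcal G_{\mathbf x}$: $t\mapsto\Gamma u(\mathbf x)\sigma a(t)M$, $t\ge0$; it enters the cusp $\gamma\xi\infty$ if $u(\mathbf x)\sigma a(t)\in\gamma\xi NA_{s_0}K$ for some $t\ge0$, and enters it deeply if $u(\mathbf x)\sigma a(t)\in\gamma\xi NA_{s_1}K$ for some $t\ge0$. *)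

theory Defs
  imports "HOL-Analysis.Analysis"
begin

text \<open>The index type of R^(n+1) is 'k + bool, where 'k indexes the n-1 coordinates
  of g_{+1} = R^(n-1) (so n - 1 = CARD('k), n \<ge> 2 automatically),
  Inr False is the coordinate 0 and Inr True the time-like coordinate n.\<close>

type_synonym 'k lmat = "real^('k + bool)^('k + bool)"

definition Jf :: "'k::finite lmat" where
  "Jf = (\<chi> i j. if i = j then (if i = Inr True then -1 else 1) else 0)"

text \<open>G = SO(n,1) identity component (= SO(n,1)^0, whose maximal compact is SO(n)).\<close>
definition LG :: "'k::finite lmat set" where
  "LG = {g. transpose g ** Jf ** g = Jf \<and> det g = 1 \<and> g $ Inr True $ Inr True > 0}"

text \<open>K: stabiliser of the base point (0,...,0,1) of the hyperboloid model; K \<cong> SO(n).\<close>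
definition LK :: "'k::finite lmat set" where
  "LK = {g \<in> LG. g *v axis (Inr True) 1 = axis (Inr True) 1}"

text \<open>a(t) = exp(tH), H the boost generator in the (0,n)-plane.\<close>
definition LA :: "real \<Rightarrow> 'k::finite lmat" where
  "LA t = (\<chi> r c. if r = Inr False \<or> r = Inr True
      then (if r = c then cosh t else if c = Inr False \<or> c = Inr True then sinh t else 0)
      else (if r = c then 1 else 0))"

text \<open>The element X(x) of g_{+1} (eigenspace of ad H for eigenvalue +1), x in R^(n-1).\<close>
definition Xm :: "real^'k \<Rightarrow> 'k::finite lmat" where
  "Xm x = (\<chi> r c. case r of
       Inl i \<Rightarrow> (case c of Inr b \<Rightarrow> (if b then - (x $ i) else x $ i) | Inl _ \<Rightarrow> 0)
     | Inr _ \<Rightarrow> (case c of Inl j \<Rightarrow> - (x $ j) | Inr _ \<Rightarrow> 0))"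

text \<open>u(x) = exp X(x); since X(x)^3 = 0 the exponential series is I + X + X^2/2.\<close>
definition uu :: "real^'k \<Rightarrow> 'k::finite lmat" where
  "uu x = mat 1 + Xm x + (1/2) *\<^sub>R (Xm x ** Xm x)"

definition LN :: "'k::finite lmat set" where
  "LN = range uu"

definition LM :: "'k::finite lmat set" where
  "LM = {m \<in> LK. \<forall>t. m ** LA t = LA t ** m}"

definition LP :: "'k::finite lmat set" where
  "LP = {m ** LA t ** uu y | m t y. m \<in> LM}"

definition Omega :: "'k::finite lmat set \<Rightarrow> real \<Rightarrow> 'k lmat set" where
  "Omega eta s = {v ** LA t ** k | v t k. v \<in> eta \<and> s \<le> t \<and> k \<in> LK}"

definition lmul :: "'k::finite lmat \<Rightarrow> 'k lmat set \<Rightarrow> 'k lmat set" where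
  "lmul g S = (\<lambda>w. g ** w) ` S"

text \<open>For g = u(x) sg m a(r) u(y): g infinity = x and h(g infinity) = e^r.\<close>
definition bdry :: "'k::finite lmat \<Rightarrow> 'k lmat \<Rightarrow> real^'k" where
  "bdry sg g = (THE x. \<exists>m\<in>LM. \<exists>r y. g = uu x ** sg ** m ** LA r ** uu y)"

definition height :: "'k::finite lmat \<Rightarrow> 'k lmat \<Rightarrow> real" where
  "height sg g = exp (THE r. \<exists>x. \<exists>m\<in>LM. \<exists>y. g = uu x ** sg ** m ** LA r ** uu y)"

definition enters :: "'k::finite lmat \<Rightarrow> real^'k \<Rightarrow> 'k lmat \<Rightarrow> real \<Rightarrow> bool" where
  "enters sg x g s = (\<exists>t\<ge>0. uu x ** sg ** LA t \<in> lmul g (Omega LN s))"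

end

theory Submission
  imports Defs
begin

(* In the hyperboloid model the cusp g\<infinity> is the null line through g \<nu>, where \<nu> = e0 + en
   spans the line that P fixes up to scaling. Write g = u(x1) \<sigma> m a(r) u(y) (Bruhat decomposition, so
   g\<infinity> = x1 and h(g\<infinity>) = e^r). Pulled back by g, the point u(x) \<sigma> a(t) en of G_x has Lorentz
   pairing -e^r (e^-t + |x - x1|^2 e^t) with \<nu>, and by the Iwasawa decomposition G = N A K it lies
   in N A_s K iff this pairing is at least -e^-s. If |x - x1| \<le> c e^-r, the choice e^-t = e^(-s-r)/D
   satisfies the bound, and t \<ge> 0 as soon as e^(-s-r) \<le> D. So everything rests on a lower bound
   for the heights of the cusps \<gamma>\<xi>\<infinity>: a cusp of very small height would make a translate of
   \<Omega>(\<eta>, s0) meet \<Omega>(\<eta>, s) for some \<gamma> outside \<xi> N M \<xi>^-1, contradicting condition (iv). *)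

definition spatial :: "real^('k::finite + bool) \<Rightarrow> real^'k" where
  "spatial v = (\<chi> i. v $ Inl i)"

lemma sum_UNIV_Plus_bool:
  "(\<Sum>i\<in>(UNIV::('k::finite + bool) set). f i)
     = (\<Sum>i\<in>UNIV. f (Inl i)) + f (Inr False) + f (Inr True)"
proof -
  have "(\<Sum>i\<in>(UNIV::('k + bool) set). f i) = (\<Sum>i\<in>UNIV <+> UNIV. f i)" by simp
  also have "\<dots> = (\<Sum>i\<in>UNIV. f (Inl i)) + (\<Sum>b\<in>UNIV. f (Inr b))"
    by (subst sum.Plus) auto
  finally show ?thesis by (simp add: UNIV_bool add.assoc)
qed

lemma inner_vec_split:
  "(v::real^('k::finite + bool)) \<bullet> w
     = spatial v \<bullet> spatial w + v$Inr False * w$Inr False + v$Inr True * w$Inr True"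
  by (simp add: inner_vec_def sum_UNIV_Plus_bool spatial_def)

lemma vec_eq_split_iff:
  "(v::real^('k::finite + bool)) = w \<longleftrightarrow>
     spatial v = spatial w \<and> v$Inr False = w$Inr False \<and> v$Inr True = w$Inr True"
  by (auto simp: vec_eq_iff spatial_def) (metis (full_types) sum.exhaust)

lemma spatial_add [simp]: "spatial (v + w) = spatial v + spatial w"
  and spatial_scaleR [simp]: "spatial (c *\<^sub>R v) = c *\<^sub>R spatial v"
  and spatial_diff [simp]: "spatial (v - w) = spatial v - spatial w"
  by (auto simp: spatial_def vec_eq_iff)

lemma matrix_vector_axis_component: "(A *v axis j 1) $ i = A $ i $ j" for A :: "real^'n^'m"
  by (simp add: matrix_vector_mult_basis column_def)

lemma matrix_mul_cancel_left: "A ** B = mat 1 \<Longrightarrow> A ** (B ** X) = X" for A B X :: "real^'n^'n"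
  by (simp add: matrix_mul_assoc)

lemma matrix_vector_cancel_left: "A ** B = mat 1 \<Longrightarrow> A *v (B *v v) = v" for A B :: "real^'n^'n"
  by (simp add: matrix_vector_mul_assoc)

lemma matrix_inv_eq:
  fixes A B :: "real^'n^'n"
  assumes "A ** B = mat 1"
  shows "matrix_inv A = B"
proof -
  have BA: "B ** A = mat 1" using assms matrix_left_right_inverse by blast
  have inv: "A ** matrix_inv A = mat 1 \<and> matrix_inv A ** A = mat 1"
    unfolding matrix_inv_def by (rule someI[of _ B]) (use assms BA in auto)
  have "matrix_inv A = matrix_inv A ** (A ** B)" using assms by simp
  also have "\<dots> = B" by (simp add: matrix_mul_assoc inv)
  finally show ?thesis .
qed

lemma Xm_mult_vec:
  "spatial (Xm x *v v) = (v$Inr False - v$Inr True) *\<^sub>R x"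
  "(Xm x *v v)$Inr b = - (x \<bullet> spatial v)"
  by (auto simp: spatial_def vec_eq_iff matrix_vector_mult_def Xm_def sum_UNIV_Plus_bool
      inner_vec_def algebra_simps sum_negf)

lemma uu_mult_vec:
  "spatial (uu x *v v) = spatial v + (v$Inr False - v$Inr True) *\<^sub>R x"
  "(uu x *v v)$Inr False
     = v$Inr False - x \<bullet> spatial v - (x \<bullet> x) * (v$Inr False - v$Inr True) / 2"
  "(uu x *v v)$Inr True
     = v$Inr True - x \<bullet> spatial v - (x \<bullet> x) * (v$Inr False - v$Inr True) / 2"
proof -
  have e: "uu x *v v = v + Xm x *v v + (1/2) *\<^sub>R (Xm x *v (Xm x *v v))"
    by (simp add: uu_def matrix_vector_mult_add_rdistrib scaleR_matrix_vector_assoc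
        matrix_vector_mul_assoc)
  show "spatial (uu x *v v) = spatial v + (v$Inr False - v$Inr True) *\<^sub>R x"
    unfolding e by (simp add: Xm_mult_vec)
  have "(uu x *v v)$Inr b
      = v$Inr b - x \<bullet> spatial v - (x \<bullet> x) * (v$Inr False - v$Inr True) / 2" for b
    unfolding e
    by (simp only: vector_add_component vector_scaleR_component Xm_mult_vec
        inner_scaleR_right real_scaleR_def) argo
  then show "(uu x *v v)$Inr False
      = v$Inr False - x \<bullet> spatial v - (x \<bullet> x) * (v$Inr False - v$Inr True) / 2"
    and "(uu x *v v)$Inr True
      = v$Inr True - x \<bullet> spatial v - (x \<bullet> x) * (v$Inr False - v$Inr True) / 2"
    by this+
qed

lemma Jf_mult_vec:
  "spatial (Jf *v v) = spatial v"
  "(Jf *v v)$Inr False = v$Inr False"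
  "(Jf *v v)$Inr True = - v$Inr True"
  by (auto simp: spatial_def vec_eq_iff matrix_vector_mult_def Jf_def sum_UNIV_Plus_bool
      if_distrib[of "\<lambda>a. a * _"] cong: if_cong)

lemma LA_mult_vec:
  "spatial (LA t *v v) = spatial v"
  "(LA t *v v)$Inr False = cosh t * v$Inr False + sinh t * v$Inr True"
  "(LA t *v v)$Inr True = sinh t * v$Inr False + cosh t * v$Inr True"
  by (simp_all add: spatial_def vec_eq_iff matrix_vector_mult_def LA_def sum_UNIV_Plus_bool
      if_distrib[of "\<lambda>a. a * _"] cong: if_cong)

definition lform :: "real^('k::finite + bool) \<Rightarrow> real^('k + bool) \<Rightarrow> real" where
  "lform v w = spatial v \<bullet> spatial w + v$Inr False * w$Inr False - v$Inr True * w$Inr True"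

(* LG is the identity component of LSO; closure properties are easier to prove for LSO. *)

definition LSO :: "'k::finite lmat set" where
  "LSO = {g. transpose g ** Jf ** g = Jf \<and> det g = 1}"

lemma inner_Jf_eq_lform: "v \<bullet> (Jf *v w) = lform v w"
  by (simp add: inner_vec_split Jf_mult_vec lform_def)

lemma lform_commute: "lform v w = lform w v"
  by (simp add: lform_def inner_commute mult.commute)

lemma lform_scaleR_right: "lform w (c *\<^sub>R v) = c * lform w v"
  and lform_diff_right: "lform w (u - v) = lform w u - lform w v"
  by (simp_all add: lform_def inner_diff_right algebra_simps)

lemma inner_matrix_vector_transpose: "(g *v v) \<bullet> y = v \<bullet> (transpose g *v y)"
  for g :: "real^'n^'n"
  by (metis dot_lmul_matrix inner_commute transpose_matrix_vector)

lemma lform_matrix_vector: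
  "lform (g *v v) (g *v w) = v \<bullet> ((transpose g ** Jf ** g) *v w)" for g :: "'k::finite lmat"
  by (simp only: inner_Jf_eq_lform[symmetric] inner_matrix_vector_transpose
      matrix_vector_mul_assoc matrix_mul_assoc)

lemma lform_preserved:
  "transpose g ** Jf ** g = Jf \<Longrightarrow> lform (g *v v) (g *v w) = lform v w" for g :: "'k::finite lmat"
  using lform_matrix_vector[of g v w] by (simp add: inner_Jf_eq_lform)

lemma Jf_congruence_if_lform_preserved:
  fixes g :: "'k::finite lmat"
  assumes "\<And>v w. lform (g *v v) (g *v w) = lform v w"
  shows "transpose g ** Jf ** g = Jf"
proof -
  have "(transpose g ** Jf ** g) *v w = Jf *v w" for w
  proof -
    let ?d = "(transpose g ** Jf ** g) *v w - Jf *v w"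
    have "v \<bullet> ?d = 0" for v
      using assms[of v w] by (simp add: inner_diff_right lform_matrix_vector inner_Jf_eq_lform)
    from this[of ?d] show ?thesis by simp
  qed
  then show ?thesis by (simp add: matrix_eq)
qed

lemma LSO_lform: "g \<in> LSO \<Longrightarrow> lform (g *v v) (g *v w) = lform v w"
  by (simp add: LSO_def lform_preserved)

lemma LG_subset_LSO: "LG \<subseteq> LSO" by (auto simp: LG_def LSO_def)
lemma LK_subset_LG: "LK \<subseteq> LG" by (auto simp: LK_def)
lemma LM_subset_LK: "LM \<subseteq> LK" by (auto simp: LM_def)

lemma LSO_mult: "g \<in> LSO \<Longrightarrow> h \<in> LSO \<Longrightarrow> g ** h \<in> LSO"
  unfolding LSO_def
  by (auto simp: det_mul matrix_vector_mul_assoc[symmetric] lform_preserved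
      intro!: Jf_congruence_if_lform_preserved)

lemma LSO_inverse:
  assumes "g \<in> LSO"
  shows "g ** matrix_inv g = mat 1" "matrix_inv g ** g = mat 1" "matrix_inv g \<in> LSO"
proof -
  have "invertible g" using assms by (simp add: LSO_def invertible_det_nz)
  then obtain h where h: "g ** h = mat 1" "h ** g = mat 1" by (auto simp: invertible_def)
  have hi: "matrix_inv g = h" using h(1) by (rule matrix_inv_eq)
  show "g ** matrix_inv g = mat 1" "matrix_inv g ** g = mat 1" using h hi by auto
  have "det g * det h = 1" using h by (metis det_I det_mul)
  then have dh: "det h = 1" using assms by (simp add: LSO_def)
  have "lform (h *v v) (h *v w) = lform v w" for v w
    using LSO_lform[OF assms, of "h *v v" "h *v w"] by (simp add: matrix_vector_mul_assoc h)
  then show "matrix_inv g \<in> LSO" using hi dh by (simp add: LSO_def Jf_congruence_if_lform_preserved)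
qed

lemma Jf_squared: "Jf ** Jf = (mat 1 :: 'k::finite lmat)"
proof -
  have "Jf *v (Jf *v v) = v" for v :: "real^('k + bool)"
    unfolding vec_eq_split_iff by (simp add: Jf_mult_vec)
  then show ?thesis by (simp add: matrix_eq matrix_vector_mul_assoc)
qed

lemma det_squared_if_Jf_congruence:
  fixes g :: "'k::finite lmat"
  assumes "transpose g ** Jf ** g = Jf"
  shows "det g * det g = 1"
proof -
  have dJ: "det (Jf::'k lmat) * det (Jf::'k lmat) = 1" by (metis Jf_squared det_I det_mul)
  have "det g * det (Jf::'k lmat) * det g = det (Jf::'k lmat)"
    by (metis assms det_mul det_transpose)
  then have "det (Jf::'k lmat) * (det g * det g - 1) = 0" by (simp add: algebra_simps)
  with dJ show ?thesis by auto
qed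

definition e0 :: "real^('k::finite + bool)" where "e0 = axis (Inr False) 1"
definition en :: "real^('k::finite + bool)" where "en = axis (Inr True) 1"

(* nu spans the null line of the boundary point \<infinity>, and en - e0 = \<sigma> nu that of 0. *)

definition nu :: "real^('k::finite + bool)" where "nu = e0 + en"

lemma e0_components [simp]: "spatial e0 = 0" "e0$Inr False = 1" "e0$Inr True = 0"
  by (auto simp: e0_def spatial_def vec_eq_iff axis_def)
lemma en_components [simp]: "spatial en = 0" "en$Inr False = 0" "en$Inr True = 1"
  by (auto simp: en_def spatial_def vec_eq_iff axis_def)
lemma nu_components [simp]: "spatial nu = 0" "nu$Inr False = 1" "nu$Inr True = 1"
  by (auto simp: nu_def)

lemma lform_e0: "lform w e0 = w$Inr False"
  and lform_en: "lform w en = - w$Inr True"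
  and lform_nu: "lform w nu = w$Inr False - w$Inr True"
  by (simp_all add: lform_def)

(* A square of isometries has determinant (det h)^2 = 1, so only the time orientation is left. *)

lemma LG_if_square:
  fixes g :: "'k::finite lmat"
  assumes "g = h ** h" "\<And>v w. lform (h *v v) (h *v w) = lform v w"
    "\<And>v w. lform (g *v v) (g *v w) = lform v w" "(g *v en) $ Inr True > 0"
  shows "g \<in> LG"
proof -
  have "det g = det h * det h" using assms(1) det_mul by blast
  then have "det g = 1"
    using det_squared_if_Jf_congruence[OF Jf_congruence_if_lform_preserved[OF assms(2)]] by simp
  then show ?thesis
    using assms(3,4) by (simp add: LG_def Jf_congruence_if_lform_preserved en_def matrix_vector_axis_component)
qed

lemma uu_add: "uu a ** uu b = uu (a + b)"
proof -
  have "uu a *v (uu b *v v) = uu (a + b) *v v" for v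
    unfolding vec_eq_split_iff
    by (simp add: uu_mult_vec inner_add_left inner_add_right inner_commute algebra_simps
        add_divide_distrib diff_divide_distrib)
  then show ?thesis by (simp add: matrix_eq matrix_vector_mul_assoc)
qed

lemma uu_zero: "(uu 0 :: 'k::finite lmat) = mat 1"
proof -
  have "(uu 0 :: 'k lmat) *v v = v" for v unfolding vec_eq_split_iff by (simp add: uu_mult_vec)
  then show ?thesis by (simp add: matrix_eq)
qed

lemma uu_inverse: "uu a ** uu (- a) = mat 1" "uu (- a) ** uu a = mat 1"
  by (simp_all add: uu_add uu_zero)

lemma LA_add: "(LA a :: 'k::finite lmat) ** LA b = LA (a + b)"
proof -
  have "(LA a :: 'k lmat) *v (LA b *v v) = LA (a + b) *v v" for v
    unfolding vec_eq_split_iff by (simp add: LA_mult_vec cosh_add sinh_add algebra_simps)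
  then show ?thesis by (simp add: matrix_eq matrix_vector_mul_assoc)
qed

lemma LA_zero: "(LA 0 :: 'k::finite lmat) = mat 1"
proof -
  have "(LA 0 :: 'k lmat) *v v = v" for v unfolding vec_eq_split_iff by (simp add: LA_mult_vec)
  then show ?thesis by (simp add: matrix_eq)
qed

lemma LA_inverse: "(LA a :: 'k::finite lmat) ** LA (- a) = mat 1" "LA (- a) ** LA a = mat 1"
  by (simp_all add: LA_add LA_zero)

lemma uu_lform: "lform (uu x *v v) (uu x *v w) = lform v w"
  unfolding lform_def
  by (simp add: uu_mult_vec inner_add_left inner_add_right inner_diff_left inner_diff_right
      inner_commute algebra_simps add_divide_distrib diff_divide_distrib)

lemma LA_lform: "lform ((LA t :: 'k::finite lmat) *v v) (LA t *v w) = lform v w"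
proof -
  have "cosh t * cosh t - sinh t * sinh t - 1 = 0"
    using cosh_square_eq[of t] by (simp add: power2_eq_square)
  moreover have "lform ((LA t :: 'k lmat) *v v) (LA t *v w) - lform v w
      = (cosh t * cosh t - sinh t * sinh t - 1)
        * (v$Inr False * w$Inr False - v$Inr True * w$Inr True)"
    unfolding lform_def by (simp add: LA_mult_vec algebra_simps)
  ultimately show ?thesis by simp
qed

lemma uu_in_LG: "uu x \<in> LG"
proof (rule LG_if_square)
  show "uu x = uu ((1/2) *\<^sub>R x) ** uu ((1/2) *\<^sub>R x)"
    by (simp add: uu_add flip: scaleR_left_distrib)
  have "(uu x *v en) $ Inr True = 1 + (x \<bullet> x) / 2"
    by (simp add: uu_mult_vec)
  then show "(uu x *v en) $ Inr True > 0"
    by (metis add_pos_nonneg divide_nonneg_pos inner_ge_zero zero_less_one zero_less_numeral)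
qed (rule uu_lform)+

lemma LA_in_LG: "(LA t :: 'k::finite lmat) \<in> LG"
proof (rule LG_if_square)
  show "(LA t :: 'k lmat) = LA (t/2) ** LA (t/2)" by (simp add: LA_add)
  show "((LA t :: 'k lmat) *v en) $ Inr True > 0"
    by (simp add: LA_mult_vec)
qed (rule LA_lform)+

lemma uu_in_LSO: "uu x \<in> LSO" and LA_in_LSO: "LA t \<in> LSO"
  using uu_in_LG LA_in_LG LG_subset_LSO by blast+

lemma uu_nu: "uu x *v nu = nu"
  unfolding vec_eq_split_iff by (simp add: uu_mult_vec)

lemma uu_en_minus_e0:
  "spatial (uu x *v (en - e0)) = (-2) *\<^sub>R x"
  "(uu x *v (en - e0))$Inr False = x \<bullet> x - 1"
  "(uu x *v (en - e0))$Inr True = x \<bullet> x + 1"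
  by (simp add: uu_mult_vec) (simp_all add: uu_mult_vec algebra_simps)

lemma LA_nu: "(LA t :: 'k::finite lmat) *v nu = exp t *\<^sub>R nu"
  unfolding vec_eq_split_iff by (simp add: LA_mult_vec cosh_plus_sinh sinh_plus_cosh)

lemma LA_en: "(LA t :: 'k::finite lmat) *v en = sinh t *\<^sub>R e0 + cosh t *\<^sub>R en"
  unfolding vec_eq_split_iff by (simp add: LA_mult_vec)

lemma LN_nu: "v \<in> LN \<Longrightarrow> v *v nu = nu"
  by (auto simp: LN_def uu_nu)

lemma LK_fixes_en: "k \<in> LK \<Longrightarrow> k *v en = en"
  by (simp add: LK_def en_def)

lemma LK_if_fixes_en: "g \<in> LSO \<Longrightarrow> g *v en = en \<Longrightarrow> g \<in> LK"
  unfolding LK_def LG_def LSO_def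
  by (simp add: en_def[symmetric]) (metis matrix_vector_axis_component en_components(3) en_def zero_less_one)

lemma LK_mult: "a \<in> LK \<Longrightarrow> b \<in> LK \<Longrightarrow> a ** b \<in> LK"
  using LK_subset_LG LG_subset_LSO
  by (intro LK_if_fixes_en) (auto intro: LSO_mult simp: LK_fixes_en matrix_vector_mul_assoc[symmetric])

lemma mat_1_in_LK: "mat 1 \<in> LK"
  by (rule LK_if_fixes_en) (simp_all add: LSO_def)

lemma LM_fixes:
  assumes "m \<in> LM"
  shows "m *v en = en" "m *v e0 = e0" "m *v nu = nu"
proof -
  show men: "m *v en = en" using assms LM_subset_LK LK_fixes_en by blast
  have "m ** LA 1 = LA 1 ** m" using assms by (simp add: LM_def)
  then have "m *v (LA 1 *v en) = LA 1 *v (m *v en)" by (simp add: matrix_vector_mul_assoc)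
  then have "sinh (1::real) *\<^sub>R (m *v e0) = sinh 1 *\<^sub>R e0"
    by (simp add: LA_en matrix_vector_right_distrib matrix_vector_mult_scaleR men)
  then show me0: "m *v e0 = e0" by simp
  show "m *v nu = nu" by (simp add: nu_def matrix_vector_right_distrib me0 men)
qed

lemma LM_if_fixes_e0_en:
  fixes m :: "'k::finite lmat"
  assumes "m \<in> LSO" "m *v en = en" "m *v e0 = e0"
  shows "m \<in> LM"
proof -
  have c0: "(m *v v)$Inr False = v$Inr False" for v
    by (metis LSO_lform assms(1,3) lform_e0)
  have cn: "(m *v v)$Inr True = v$Inr True" for v
    by (metis LSO_lform assms(1,2) lform_en neg_equal_iff_equal)
  have LA_decomp: "(LA t :: 'k lmat) *v v = v
      + ((cosh t - 1) * v$Inr False + sinh t * v$Inr True) *\<^sub>R e0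
      + (sinh t * v$Inr False + (cosh t - 1) * v$Inr True) *\<^sub>R en" for t v
    unfolding vec_eq_split_iff by (simp add: LA_mult_vec algebra_simps)
  have "m *v (LA t *v v) = LA t *v (m *v v)" for t v
    by (subst (1 2) LA_decomp)
      (simp add: matrix_vector_right_distrib matrix_vector_mult_scaleR assms(2,3) c0 cn)
  then have "m ** LA t = LA t ** m" for t by (simp add: matrix_eq matrix_vector_mul_assoc)
  with LK_if_fixes_en[OF assms(1,2)] show ?thesis by (simp add: LM_def)
qed

(* Solve the hyperboloid equation for the two time-like coordinates, given their difference. *)

lemma hyperboloid_eq_uu_LA_en:
  assumes "lform p p = -1" "p$Inr True - p$Inr False = exp (-T)"
  shows "p = uu (- exp T *\<^sub>R spatial p) *v ((LA T :: 'k::finite lmat) *v en)"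
proof -
  define E where "E = exp (-T)"
  have E: "E > 0" by (simp add: E_def)
  have eT: "exp T = 1/E" by (simp add: E_def exp_minus divide_inverse)
  have sT: "sinh T = (1/E - E)/2" and cT: "cosh T = (1/E + E)/2"
    by (simp_all add: sinh_def cosh_def eT E_def)
  define a where "a = spatial p \<bullet> spatial p"
  have pn: "p$Inr True = p$Inr False + E" using assms(2) by (simp add: E_def)
  have "a + p$Inr False * p$Inr False - p$Inr True * p$Inr True = -1"
    using assms(1) by (simp add: lform_def a_def)
  then have a: "a = 2 * p$Inr False * E + E * E - 1" unfolding pn by (simp add: algebra_simps)
  have p0: "p$Inr False = (1/E - E)/2 + a/(2*E)" using E unfolding a by (simp add: field_simps)
  have pn': "p$Inr True = (1/E + E)/2 + a/(2*E)" using E unfolding pn a by (simp add: field_simps)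
  have yy: "(- exp T *\<^sub>R spatial p) \<bullet> (- exp T *\<^sub>R spatial p) = (1/E) * (1/E) * a"
    by (simp add: a_def eT)
  have d: "((LA T :: 'k lmat) *v en)$Inr False - ((LA T :: 'k lmat) *v en)$Inr True = - E"
    by (simp add: LA_mult_vec sT cT field_simps)
  show ?thesis
    unfolding vec_eq_split_iff uu_mult_vec d yy using E
    by (simp add: LA_mult_vec eT sT cT p0 pn' field_simps)
qed

lemma LSO_iwasawa:
  fixes q :: "'k::finite lmat"
  assumes "q \<in> LSO" "(q *v en)$Inr True - (q *v en)$Inr False = exp (-T)"
  shows "\<exists>y k. k \<in> LK \<and> q = uu y ** LA T ** k"
proof -
  define y where "y = - exp T *\<^sub>R spatial (q *v en)"
  have "lform (q *v en) (q *v en) = -1" using assms(1) by (simp add: LSO_lform lform_en)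
  then have p: "q *v en = uu y *v ((LA T :: 'k lmat) *v en)"
    unfolding y_def using assms(2) by (rule hyperboloid_eq_uu_LA_en)
  define k where "k = LA (-T) ** (uu (-y) ** q)"
  have "k *v en = en"
    unfolding k_def by (simp add: matrix_vector_mul_assoc[symmetric] p
        matrix_vector_cancel_left uu_inverse LA_inverse)
  then have "k \<in> LK"
    using assms(1) by (intro LK_if_fixes_en) (auto simp: k_def intro!: LSO_mult uu_in_LSO LA_in_LSO)
  moreover have "q = uu y ** LA T ** k"
    unfolding k_def matrix_mul_assoc[symmetric] by (simp add: matrix_mul_cancel_left uu_inverse LA_inverse)
  ultimately show ?thesis by blast
qed

lemma nu_stabiliser:
  fixes q :: "'k::finite lmat"
  assumes "q \<in> LSO" "q *v nu = nu"
  shows "\<exists>m\<in>LM. \<exists>y. q = m ** uu y"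
proof -
  define p where "p = matrix_inv q *v en"
  note qi = LSO_inverse[OF assms(1)]
  have "matrix_inv q *v nu = nu" by (metis assms(2) matrix_vector_cancel_left qi(2))
  then have "lform p nu = -1" using LSO_lform[OF qi(3), of en nu] by (simp add: p_def lform_def)
  then have "p$Inr True - p$Inr False = exp (- 0)" by (simp add: lform_nu)
  moreover have "lform p p = -1" using qi(3) by (simp add: p_def LSO_lform lform_en)
  ultimately have "p = uu (- exp 0 *\<^sub>R spatial p) *v ((LA 0 :: 'k lmat) *v en)"
    using hyperboloid_eq_uu_LA_en by blast
  then have p: "p = uu (- spatial p) *v en" by (simp add: LA_zero)
  define m where "m = q ** uu (- spatial p)"
  have men: "m *v en = en"
    unfolding m_def by (metis matrix_vector_cancel_left matrix_vector_mul_assoc p p_def qi(1))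
  have "m *v nu = nu" unfolding m_def
    by (simp add: matrix_vector_mul_assoc[symmetric] uu_nu assms(2))
  then have "m *v e0 = e0" using men by (simp add: nu_def matrix_vector_right_distrib)
  then have "m \<in> LM"
    using men assms(1) by (intro LM_if_fixes_e0_en) (auto simp: m_def intro: LSO_mult uu_in_LSO)
  moreover have "q = m ** uu (spatial p)"
    unfolding m_def matrix_mul_assoc[symmetric] by (simp add: uu_add uu_zero)
  ultimately show ?thesis by blast
qed

lemma LP_if_nu_eigenvector:
  fixes g :: "'k::finite lmat"
  assumes "g \<in> LSO" "g *v nu = c *\<^sub>R nu" "c > 0"
  shows "g \<in> LP"
proof -
  define q where "q = LA (- ln c) ** g"
  have "q *v nu = nu"
    using assms(3) by (simp add: q_def matrix_vector_mul_assoc[symmetric] assms(2)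
        matrix_vector_mult_scaleR LA_nu exp_minus)
  moreover have "q \<in> LSO" unfolding q_def using assms(1) by (intro LSO_mult LA_in_LSO)
  ultimately obtain m y where m: "m \<in> LM" "q = m ** uu y" using nu_stabiliser by blast
  have "g = LA (ln c) ** q" unfolding q_def by (simp add: matrix_mul_cancel_left LA_inverse)
  also have "\<dots> = (LA (ln c) ** m) ** uu y" by (simp add: m matrix_mul_assoc)
  also have "LA (ln c) ** m = m ** LA (ln c)" using m(1) by (simp add: LM_def)
  finally show ?thesis using m(1) by (auto simp: LP_def)
qed

lemma LA_conj_by_involution:
  fixes sg :: "'k::finite lmat"
  assumes "sg ** sg = mat 1" "\<And>t. sg ** LA t ** matrix_inv sg = LA (- t)"
  shows "sg ** LA t = LA (- t) ** sg"
proof -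
  have "sg ** LA t = (sg ** LA t ** sg) ** sg"
    by (simp add: matrix_mul_assoc[symmetric] assms(1))
  also have "\<dots> = LA (- t) ** sg" using assms(2)[of t] matrix_inv_eq[OF assms(1)] by simp
  finally show ?thesis .
qed

lemma involution_nu:
  fixes sg :: "'k::finite lmat"
  assumes "sg \<in> LK" "\<And>t. sg ** LA t = LA (- t) ** sg"
  shows "sg *v nu = en - e0"
proof -
  have sen: "sg *v en = en" using assms(1) by (rule LK_fixes_en)
  have "sg *v (LA 1 *v en) = LA (-1) *v (sg *v en)"
    by (simp add: matrix_vector_mul_assoc assms(2))
  then have "sinh (1::real) *\<^sub>R (sg *v e0) = sinh 1 *\<^sub>R (- e0)"
    by (simp add: LA_en matrix_vector_right_distrib matrix_vector_mult_scaleR sen)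
  then have "sg *v e0 = - e0" by (metis scaleR_cancel_left sinh_real_zero_iff zero_neq_one)
  then show ?thesis by (simp add: nu_def matrix_vector_right_distrib sen)
qed

(* Reverse Cauchy-Schwarz inequality: q unit time-like, w not space-like. *)

lemma lform_timelike_bound:
  assumes q: "lform q q = -1" "q$Inr True > 0" and w: "lform w w \<le> 0"
  shows "\<bar>lform w q + w$Inr True * q$Inr True\<bar> \<le> \<bar>w$Inr True\<bar> * sqrt (q$Inr True ^ 2 - 1)"
proof -
  let ?h = "\<lambda>v. v - v$Inr True *\<^sub>R en"
  have inner_h: "?h v \<bullet> ?h u = spatial v \<bullet> spatial u + v$Inr False * u$Inr False" for v u
    by (simp add: inner_vec_split)
  have lform_h: "lform w q + w$Inr True * q$Inr True = ?h w \<bullet> ?h q"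
    by (simp only: inner_h lform_def)
  have hw: "sqrt (?h w \<bullet> ?h w) \<le> \<bar>w$Inr True\<bar>"
    using w real_sqrt_le_mono[of _ "w$Inr True * w$Inr True"]
    by (simp only: inner_h lform_def) (simp add: real_sqrt_abs2)
  have hq: "?h q \<bullet> ?h q = q$Inr True ^ 2 - 1"
    using q by (simp only: inner_h lform_def) (simp add: power2_eq_square)
  have "\<bar>?h w \<bullet> ?h q\<bar> \<le> sqrt (?h w \<bullet> ?h w) * sqrt (?h q \<bullet> ?h q)"
    using Cauchy_Schwarz_ineq2[of "?h w" "?h q"] by (simp add: norm_eq_sqrt_inner)
  also have "\<dots> \<le> \<bar>w$Inr True\<bar> * sqrt (?h q \<bullet> ?h q)"
    using hw by (simp add: mult_right_mono)
  finally show ?thesis unfolding lform_h hq .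
qed

lemma sqrt_square_minus_one_less: "0 < z \<Longrightarrow> sqrt (z ^ 2 - 1) < (z::real)"
  using real_sqrt_less_mono[of "z ^ 2 - 1" "z ^ 2"] by simp

lemma LG_future_timelike:
  fixes a :: "'k::finite lmat"
  assumes "a \<in> LG" "lform q q = -1" "q$Inr True > 0"
  shows "(a *v q)$Inr True > 0"
proof -
  have aw: "a \<in> LSO" using assms(1) LG_subset_LSO by blast
  define r where "r = matrix_inv a *v en"
  have ar: "a *v r = en" unfolding r_def by (simp add: matrix_vector_mul_assoc LSO_inverse aw)
  have "- r$Inr True = lform en (a *v en)"
    using LSO_lform[OF aw, of r en] by (simp add: ar lform_en)
  also have "\<dots> = - (a *v en)$Inr True" by (simp add: lform_commute[of en] lform_en)
  finally have "r$Inr True > 0" using assms(1)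
    by (simp add: LG_def en_def matrix_vector_axis_component)
  moreover have "lform r r = -1" using LSO_lform[OF aw, of r r] by (simp add: ar lform_en)
  moreover have "(a *v q)$Inr True = - lform q r"
    using LSO_lform[OF aw, of q r] by (simp add: ar lform_en)
  ultimately have "\<bar>lform q r + q$Inr True * r$Inr True\<bar> < q$Inr True * r$Inr True"
    using lform_timelike_bound[of r q] sqrt_square_minus_one_less[of "r$Inr True"] assms(2,3)
    by (smt (verit) mult_strict_left_mono)
  then show ?thesis using \<open>(a *v q)$Inr True = - lform q r\<close> by simp
qed

lemma LG_mult:
  fixes a b :: "'k::finite lmat"
  assumes "a \<in> LG" "b \<in> LG"
  shows "a ** b \<in> LG"
proof -
  have "a ** b \<in> LSO" using assms LG_subset_LSO LSO_mult by blast
  moreover have "lform (b *v en) (b *v en) = -1"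
    using assms(2) LG_subset_LSO by (auto simp: LSO_lform lform_en)
  moreover have "(b *v en)$Inr True > 0"
    using assms(2) by (simp add: en_def matrix_vector_axis_component LG_def)
  ultimately have "a ** b \<in> LSO" "((a ** b) *v en)$Inr True > 0"
    using LG_future_timelike[OF assms(1)] by (auto simp: matrix_vector_mul_assoc[symmetric])
  then show ?thesis by (simp add: LG_def LSO_def en_def matrix_vector_axis_component)
qed

lemma null_vector_eq_uu_en_minus_e0:
  assumes "lform w w = 0" "w$Inr True - w$Inr False = d" "d > 0"
  shows "w = (d/2) *\<^sub>R (uu (- (1/d) *\<^sub>R spatial w) *v (en - e0))"
proof -
  have "spatial w \<bullet> spatial w = d * (w$Inr True + w$Inr False)"
    using assms(1,2) by (simp add: lform_def algebra_simps)
  moreover have "(- (1/d) *\<^sub>R spatial w) \<bullet> (- (1/d) *\<^sub>R spatial w)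
      = (spatial w \<bullet> spatial w) / (d * d)" by simp
  ultimately have xx: "(- (1/d) *\<^sub>R spatial w) \<bullet> (- (1/d) *\<^sub>R spatial w)
      = (w$Inr True + w$Inr False) / d"
    using assms(3) by simp
  show ?thesis
    unfolding vec_eq_split_iff spatial_scaleR vector_scaleR_component uu_en_minus_e0 xx
    using assms(2,3) by (auto simp: field_simps)
qed

lemma LG_nu_time_component_pos:
  fixes g :: "'k::finite lmat"
  assumes "g \<in> LG"
  shows "(g *v nu)$Inr True > 0"
proof (rule ccontr)
  assume neg: "\<not> ?thesis"
  have gw: "g \<in> LSO" using assms LG_subset_LSO by blast
  let ?w = "g *v nu" and ?q = "g *v en"
  have "lform ?q ?q = -1" using gw by (simp add: LSO_lform lform_en)
  moreover have "?q$Inr True > 0" using assms by (simp add: LG_def en_def matrix_vector_axis_component)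
  moreover have "lform ?w ?w = 0" using gw by (simp add: LSO_lform lform_nu)
  moreover have "lform ?w ?q = -1" using gw by (simp add: LSO_lform lform_en)
  ultimately have "\<bar>-1 + ?w$Inr True * ?q$Inr True\<bar> \<le> \<bar>?w$Inr True\<bar> * ?q$Inr True"
    using lform_timelike_bound[of ?q ?w] sqrt_square_minus_one_less[of "?q$Inr True"]
    by (smt (verit, best) abs_ge_zero mult_left_mono)
  moreover have "?w$Inr True * ?q$Inr True \<le> 0"
    using neg \<open>?q$Inr True > 0\<close> by (simp add: mult_nonpos_nonneg)
  moreover have "\<bar>?w$Inr True\<bar> * ?q$Inr True = - (?w$Inr True * ?q$Inr True)"
    using neg \<open>?q$Inr True > 0\<close> by simp
  ultimately show False using abs_ge_minus_self[of "-1 + ?w$Inr True * ?q$Inr True"] by linarith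
qed

lemma bruhat_decomposition:
  fixes sg g :: "'k::finite lmat"
  assumes sg: "sg *v nu = en - e0" "sg \<in> LSO" and g: "g \<in> LG" "g \<notin> LP"
  shows "\<exists>x m r y. m \<in> LM \<and> g = uu x ** sg ** m ** LA r ** uu y"
proof -
  have gw: "g \<in> LSO" using g(1) LG_subset_LSO by blast
  define w where "w = g *v nu"
  define d where "d = w$Inr True - w$Inr False"
  have null: "lform w w = 0" using gw by (simp add: w_def LSO_lform lform_nu)
  have wn: "w$Inr True > 0" unfolding w_def using g(1) by (rule LG_nu_time_component_pos)
  have "w$Inr False * w$Inr False \<le> w$Inr True * w$Inr True"
    using null inner_ge_zero[of "spatial w"] unfolding lform_def by linarith
  then have "\<bar>w$Inr False\<bar> \<le> w$Inr True"
    using wn by (metis abs_le_square_iff abs_of_pos power2_eq_square)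
  moreover have "d \<noteq> 0"
  proof
    assume "d = 0"
    then have "spatial w = 0" and "w$Inr False = w$Inr True"
      using null by (simp_all add: d_def lform_def)
    then have "g *v nu = w$Inr True *\<^sub>R nu" unfolding w_def vec_eq_split_iff by simp
    then show False using LP_if_nu_eigenvector[OF gw _ wn] g(2) by blast
  qed
  ultimately have d: "d > 0" by (simp add: d_def)
  define x where "x = - (1/d) *\<^sub>R spatial w"
  define h where "h = uu x ** sg ** LA (ln (d/2))"
  have hw: "h \<in> LSO" unfolding h_def using sg(2) by (intro LSO_mult uu_in_LSO LA_in_LSO)
  have "h *v nu = (d/2) *\<^sub>R (uu x *v (en - e0))"
    unfolding h_def using d
    by (simp add: matrix_vector_mul_assoc[symmetric] LA_nu matrix_vector_mult_scaleR sg(1))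
  also have "\<dots> = g *v nu"
    unfolding x_def using null_vector_eq_uu_en_minus_e0[OF null _ d] by (simp add: d_def w_def)
  finally have "(matrix_inv h ** g) *v nu = nu"
    by (metis LSO_inverse(2) hw matrix_vector_cancel_left matrix_vector_mul_assoc)
  then obtain m y where m: "m \<in> LM" "matrix_inv h ** g = m ** uu y"
    using nu_stabiliser hw gw by (meson LSO_inverse(3) LSO_mult)
  have "g = h ** (matrix_inv h ** g)" by (simp add: matrix_mul_cancel_left LSO_inverse hw)
  also have "\<dots> = uu x ** sg ** (LA (ln (d/2)) ** m) ** uu y"
    by (simp only: m(2)) (simp add: h_def matrix_mul_assoc)
  also have "LA (ln (d/2)) ** m = m ** LA (ln (d/2))" using m(1) by (simp add: LM_def)
  finally show ?thesis using m(1) by (auto simp: matrix_mul_assoc)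
qed

lemma bruhat_nu:
  fixes sg :: "'k::finite lmat"
  assumes "sg *v nu = en - e0" "m \<in> LM" "g = uu x ** sg ** m ** LA r ** uu y"
  shows "g *v nu = exp r *\<^sub>R (uu x *v (en - e0))"
  unfolding assms(3)
  by (simp only: matrix_vector_mul_assoc[symmetric] uu_nu LA_nu matrix_vector_mult_scaleR
      LM_fixes[OF assms(2)] assms(1))

lemma exp_scaleR_uu_en_minus_e0_inject:
  fixes x x' :: "real^'k::finite"
  assumes "exp r *\<^sub>R (uu x *v (en - e0)) = exp r' *\<^sub>R (uu x' *v (en - e0))"
  shows "r = r' \<and> x = x'"
proof -
  have "(exp r *\<^sub>R (uu x *v (en - e0)))$Inr True - (exp r *\<^sub>R (uu x *v (en - e0)))$Inr False
      = 2 * exp r" for r and x :: "real^'k"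
    by (simp only: vector_scaleR_component uu_en_minus_e0) (simp add: algebra_simps)
  then have "2 * exp r = 2 * exp r'" using assms by metis
  then have r: "r = r'" by simp
  then show ?thesis using arg_cong[OF assms, of spatial] by (simp add: uu_en_minus_e0)
qed

lemma bdry_height:
  fixes sg :: "'k::finite lmat"
  assumes "sg *v nu = en - e0" "m \<in> LM" "g = uu x ** sg ** m ** LA r ** uu y"
  shows "bdry sg g = x" "height sg g = exp r"
proof -
  have unique: "r' = r \<and> x' = x"
    if "m' \<in> LM" "g = uu x' ** sg ** m' ** LA r' ** uu y'" for x' m' r' y'
    using exp_scaleR_uu_en_minus_e0_inject bruhat_nu[OF assms(1) that] bruhat_nu[OF assms] by metis
  show "bdry sg g = x" unfolding bdry_def
    by (rule the_equality) (use assms unique in blast)+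
  have "(THE r. \<exists>x. \<exists>m\<in>LM. \<exists>y. g = uu x ** sg ** m ** LA r ** uu y) = r"
    by (rule the_equality) (use assms unique in blast)+
  then show "height sg g = exp r" by (simp add: height_def)
qed

lemma lform_pullback_geodesic:
  fixes sg g :: "'k::finite lmat"
  assumes sg: "sg \<in> LK" "\<And>t. sg ** LA t = LA (- t) ** sg"
    and g: "g \<in> LSO" "m \<in> LM" "g = uu x1 ** sg ** m ** LA r ** uu y"
  shows "lform ((matrix_inv g ** (uu x ** sg ** LA t)) *v en) nu
    = - exp r * (exp (- t) + norm (x - x1) ^ 2 * exp t)"
proof -
  define p where "p = (matrix_inv g ** (uu x ** sg ** LA t)) *v en"
  have "g *v p = uu x *v (sg *v (LA t *v en))"
    unfolding p_def matrix_vector_mul_assoc[symmetric]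
    by (simp add: matrix_vector_cancel_left LSO_inverse g(1))
  also have "sg *v (LA t *v en) = LA (- t) *v en"
    by (simp add: matrix_vector_mul_assoc sg(2))
      (simp add: matrix_vector_mul_assoc[symmetric] LK_fixes_en[OF sg(1)])
  also have "uu x = uu x1 ** uu (x - x1)" by (simp add: uu_add)
  finally have gp: "g *v p = uu x1 *v (uu (x - x1) *v (LA (- t) *v en))"
    by (simp add: matrix_vector_mul_assoc matrix_mul_assoc)
  have "lform p nu = lform (g *v p) (g *v nu)" using g(1) by (simp only: LSO_lform)
  also have "\<dots> = exp r * lform (uu (x - x1) *v (LA (- t) *v en)) (en - e0)"
    unfolding gp bruhat_nu[OF involution_nu[OF sg] g(2,3)] lform_scaleR_right uu_lform ..
  also have "lform (uu (x - x1) *v (LA (- t) *v en)) (en - e0)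
      = - (exp (- t) + (x - x1) \<bullet> (x - x1) * exp t)"
    unfolding lform_diff_right lform_en lform_e0
    by (simp add: uu_mult_vec LA_mult_vec algebra_simps flip: cosh_minus_sinh cosh_plus_sinh)
  finally show ?thesis by (simp add: p_def power2_norm_eq_inner algebra_simps)
qed

lemma enters_if_horoball_bound:
  fixes sg g :: "'k::finite lmat"
  assumes sg: "sg \<in> LK" "\<And>t. sg ** LA t = LA (- t) ** sg"
    and g: "g \<in> LSO" "m \<in> LM" "g = uu x1 ** sg ** m ** LA r ** uu y"
    and t: "t \<ge> 0" "exp r * (exp (- t) + norm (x - x1) ^ 2 * exp t) \<le> exp (- s)"
  shows "enters sg x g s"
proof -
  define W where "W = matrix_inv g ** (uu x ** sg ** LA t)"
  define Q where "Q = exp r * (exp (- t) + norm (x - x1) ^ 2 * exp t)"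
  have Q: "Q > 0" unfolding Q_def by (intro mult_pos_pos add_pos_nonneg) auto
  have "W \<in> LSO" unfolding W_def using g(1) sg(1) LK_subset_LG LG_subset_LSO
    by (intro LSO_mult LSO_inverse uu_in_LSO LA_in_LSO) auto
  moreover have "(W *v en)$Inr True - (W *v en)$Inr False = exp (- (- ln Q))"
    using lform_pullback_geodesic[OF sg g, of x t] Q by (simp add: W_def Q_def lform_nu)
  ultimately obtain y' k where k: "k \<in> LK" "W = uu y' ** LA (- ln Q) ** k"
    using LSO_iwasawa by blast
  have "ln Q \<le> ln (exp (- s))" using t(2) Q by (subst ln_le_cancel_iff) (simp_all add: Q_def)
  then have "- ln Q \<ge> s" by simp
  then have "W \<in> Omega LN s" unfolding Omega_def LN_def using k by blast
  moreover have "uu x ** sg ** LA t = g ** W"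
    unfolding W_def by (simp add: matrix_mul_cancel_left LSO_inverse g(1))
  ultimately show ?thesis using t(1) by (auto simp: enters_def lmul_def)
qed

(* The geodesic is followed up to e^-t = e^(-s-r) / D; the bound e^-r \<le> D keeps t \<ge> 0. *)

lemma enters_if_near_cusp:
  fixes sg g :: "'k::finite lmat"
  assumes sg: "sg \<in> LK" "\<And>t. sg ** LA t = LA (- t) ** sg"
    and g: "g \<in> LSO" "m \<in> LM" "g = uu x1 ** sg ** m ** LA r ** uu y"
    and D: "2 \<le> D" "exp (- r) \<le> D" and s: "0 \<le> s"
    and near: "norm (x - x1) \<le> exp (- s) / (2 * D) / exp r"
  shows "enters sg x g s"
proof (rule enters_if_horoball_bound[OF sg g])
  define B where "B = exp (- s - r)"
  have B: "B > 0" "exp r * B = exp (- s)" by (simp_all add: B_def flip: exp_add)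
  have "- r \<le> ln D" using D by (simp add: ln_ge_iff)
  then show "0 \<le> s + r + ln D" using s by simp
  have et: "exp (- (s + r + ln D)) = B / D" "exp (s + r + ln D) = D / B"
    using D by (simp_all add: B_def exp_add exp_diff exp_minus field_simps)
  have "norm (x - x1) \<le> B / (2 * D)" using near by (simp add: B_def exp_diff field_simps)
  then have "norm (x - x1) ^ 2 \<le> (B / (2 * D)) ^ 2" by (simp add: power_mono)
  then have "norm (x - x1) ^ 2 * (D / B) \<le> B / (4 * D)"
    using B D by (simp add: field_simps power2_eq_square)
  moreover have "B / D + B / (4 * D) \<le> B" using B D by (simp add: field_simps)
  ultimately have "exp r * (B / D + norm (x - x1) ^ 2 * (D / B)) \<le> exp r * B" by simp
  then show "exp r * (exp (- (s + r + ln D)) + norm (x - x1) ^ 2 * exp (s + r + ln D)) \<le> exp (- s)"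
    unfolding et B(2) .
qed

lemma matrix_add_rdistrib: "(A + B) ** C = A ** C + B ** C"
  for A B :: "real^'n^'m" and C :: "real^'p^'n"
  by (vector matrix_matrix_mult_def sum.distrib distrib_right)

lemma compact_matrix_conj_image:
  "compact C \<Longrightarrow> compact ((\<lambda>c::real^'n^'n. A ** c ** B) ` C)"
proof (intro compact_continuous_image linear_continuous_on)
  have "linear (\<lambda>c::real^'n^'n. A ** c ** B)"
    by (rule linearI)
      (simp_all add: matrix_add_ldistrib matrix_add_rdistrib matrix_scalar_ac scalar_matrix_assoc)
  then show "bounded_linear (\<lambda>c::real^'n^'n. A ** c ** B)"
    by (simp add: linear_conv_bounded_linear)
qed

lemma conj_conj_inverse:
  "g \<in> LSO \<Longrightarrow> matrix_inv g ** (g ** v ** matrix_inv g) ** g = v"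
  using LSO_inverse(2)[of g] by (simp add: matrix_mul_assoc[symmetric] matrix_mul_cancel_left)

lemma conj_factor_eq:
  assumes "g \<in> LSO" "g ** v ** matrix_inv g = d ** c"
  shows "g ** v = d ** g ** (matrix_inv g ** c ** g)"
proof -
  have inv: "g ** matrix_inv g = mat 1" "matrix_inv g ** g = mat 1"
    using assms(1) LSO_inverse(1,2) by auto
  have "g ** v = (g ** v ** matrix_inv g) ** g" by (simp add: matrix_mul_assoc[symmetric] inv)
  also have "\<dots> = d ** ((g ** matrix_inv g) ** c) ** g" by (simp add: assms(2) inv)
  also have "\<dots> = d ** g ** (matrix_inv g ** c ** g)" by (simp add: matrix_mul_assoc)
  finally show ?thesis .
qed

lemma conj_LN_fundamental_set:
  fixes Gamma Xi eta0 :: "'k::finite lmat set"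
  assumes Xi: "finite Xi" "Xi \<subseteq> LSO" and eta0: "compact eta0" "eta0 \<subseteq> LN"
    and cocompact: "\<And>xi. xi \<in> Xi \<Longrightarrow> \<exists>C. compact C
        \<and> C \<subseteq> {xi ** v ** matrix_inv xi | v. v \<in> LN}
        \<and> {xi ** v ** matrix_inv xi | v. v \<in> LN}
            \<subseteq> {g ** c | g c. g \<in> Gamma \<inter> {xi ** v ** matrix_inv xi | v. v \<in> LN} \<and> c \<in> C}"
  shows "\<exists>eta. compact eta \<and> eta0 \<subseteq> eta \<and> eta \<subseteq> LN \<and>
    (\<forall>xi\<in>Xi. \<forall>v\<in>LN. \<exists>dl\<in>Gamma. \<exists>w\<in>eta.
       dl \<in> {xi ** u ** matrix_inv xi | u. u \<in> LN} \<and> xi ** v = dl ** xi ** w)"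
proof -
  from cocompact have "\<forall>xi\<in>Xi. \<exists>C. compact C
        \<and> C \<subseteq> {xi ** v ** matrix_inv xi | v. v \<in> LN}
        \<and> {xi ** v ** matrix_inv xi | v. v \<in> LN}
            \<subseteq> {g ** c | g c. g \<in> Gamma \<inter> {xi ** v ** matrix_inv xi | v. v \<in> LN} \<and> c \<in> C}"
    by blast
  then obtain C where C: "\<forall>xi\<in>Xi. compact (C xi)
        \<and> C xi \<subseteq> {xi ** v ** matrix_inv xi | v. v \<in> LN}
        \<and> {xi ** v ** matrix_inv xi | v. v \<in> LN}
            \<subseteq> {g ** c | g c. g \<in> Gamma \<inter> {xi ** v ** matrix_inv xi | v. v \<in> LN} \<and> c \<in> C xi}"
    by (rule bchoice[elim_format]) blast
  then have C_compact: "compact (C xi)"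
    and C_sub: "C xi \<subseteq> {xi ** v ** matrix_inv xi | v. v \<in> LN}"
    and C_cover: "{xi ** v ** matrix_inv xi | v. v \<in> LN}
      \<subseteq> {g ** c | g c. g \<in> Gamma \<inter> {xi ** v ** matrix_inv xi | v. v \<in> LN} \<and> c \<in> C xi}"
    if "xi \<in> Xi" for xi
    using that by auto
  have Xi_LSO: "xi \<in> LSO" if "xi \<in> Xi" for xi using that Xi(2) by blast
  define eta where "eta = eta0 \<union> (\<Union>xi\<in>Xi. (\<lambda>c. matrix_inv xi ** c ** xi) ` C xi)"
  have "compact eta"
    unfolding eta_def using eta0(1) Xi(1) C_compact
    by (intro compact_Un compact_UN compact_matrix_conj_image) auto
  moreover have "eta \<subseteq> LN"
  proof -
    have "matrix_inv xi ** c ** xi \<in> LN" if xi: "xi \<in> Xi" and c: "c \<in> C xi" for xi c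
    proof -
      obtain v where "v \<in> LN" "c = xi ** v ** matrix_inv xi" using C_sub[OF xi] c by blast
      then show ?thesis using conj_conj_inverse[OF Xi_LSO[OF xi]] by simp
    qed
    then show ?thesis using eta0(2) by (auto simp: eta_def)
  qed
  moreover have "\<exists>dl\<in>Gamma. \<exists>w\<in>eta.
      dl \<in> {xi ** u ** matrix_inv xi | u. u \<in> LN} \<and> xi ** v = dl ** xi ** w"
    if xi: "xi \<in> Xi" and v: "v \<in> LN" for xi v
  proof -
    obtain dl c where dl: "dl \<in> Gamma" "dl \<in> {xi ** u ** matrix_inv xi | u. u \<in> LN}"
      and c: "c \<in> C xi" and "xi ** v ** matrix_inv xi = dl ** c"
    proof -
      have "xi ** v ** matrix_inv xi \<in> {xi ** v ** matrix_inv xi | v. v \<in> LN}" using v by blast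
      then show ?thesis using C_cover[OF xi] that by blast
    qed
    then have "xi ** v = dl ** xi ** (matrix_inv xi ** c ** xi)"
      using Xi_LSO[OF xi] conj_factor_eq by blast
    moreover have "matrix_inv xi ** c ** xi \<in> eta" using c xi by (auto simp: eta_def)
    ultimately show ?thesis using dl by blast
  qed
  moreover have "eta0 \<subseteq> eta" by (auto simp: eta_def)
  ultimately show ?thesis by blast
qed

lemma bruhat_translate_eq:
  fixes sg g d0 :: "'k::finite lmat"
  assumes sg: "\<And>t. sg ** LA t = LA (- t) ** sg"
    and g: "m \<in> LM" "g = uu x1 ** sg ** m ** LA r ** uu y"
    and d0: "uu x1 = d0 ** c" "matrix_inv d0 ** d0 = mat 1"
  shows "matrix_inv d0 ** (g ** uu (- y) ** LA s) = c ** LA (- (r + s)) ** (sg ** m)"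
proof -
  have "g ** uu (- y) ** LA s = uu x1 ** sg ** (m ** LA (r + s))"
    unfolding g(2) by (simp add: matrix_mul_assoc[symmetric] matrix_mul_cancel_left uu_inverse LA_add)
  also have "m ** LA (r + s) = LA (r + s) ** m" using g(1) by (simp add: LM_def)
  also have "uu x1 ** sg ** (LA (r + s) ** m) = d0 ** c ** (sg ** LA (r + s)) ** m"
    by (simp add: d0(1) matrix_mul_assoc)
  also have "\<dots> = d0 ** (c ** LA (- (r + s)) ** (sg ** m))"
    by (simp only: sg) (simp add: matrix_mul_assoc)
  finally show ?thesis by (simp add: matrix_mul_cancel_left d0(2))
qed

lemma LP_if_N_NM_N:
  fixes g :: "'k::finite lmat"
  assumes "g \<in> LSO" "g ** n1 = n2 ** n3 ** m" "n1 \<in> LN" "n2 \<in> LN" "n3 \<in> LN" "m \<in> LM"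
  shows "g \<in> LP"
proof -
  have "g *v nu = (g ** n1) *v nu" using assms(3) by (simp add: LN_nu matrix_vector_mul_assoc[symmetric])
  also have "\<dots> = 1 *\<^sub>R nu"
    using assms(4-6) by (simp add: assms(2) LN_nu LM_fixes matrix_vector_mul_assoc[symmetric])
  finally show ?thesis using assms(1) LP_if_nu_eigenvector by fastforce
qed

lemma bruhat_exponent_lower_bound:
  fixes Gamma Xi eta :: "'k::finite lmat set" and sg g xi :: "'k lmat"
  assumes sg: "sg \<in> LK" "\<And>t. sg ** LA t = LA (- t) ** sg"
    and Gamma: "Gamma \<subseteq> LSO" "\<And>g h. g \<in> Gamma \<Longrightarrow> h \<in> Gamma \<Longrightarrow> g ** h \<in> Gamma"
      "\<And>g. g \<in> Gamma \<Longrightarrow> matrix_inv g \<in> Gamma"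
    and Xi: "mat 1 \<in> Xi"
    and cover: "\<forall>xi\<in>Xi. \<forall>v\<in>LN. \<exists>dl\<in>Gamma. \<exists>w\<in>eta.
       dl \<in> {xi ** u ** matrix_inv xi | u. u \<in> LN} \<and> xi ** v = dl ** xi ** w"
    and separated: "\<forall>g\<in>Gamma. \<forall>xi1\<in>Xi. \<forall>xi2\<in>Xi.
       lmul (g ** xi1) (Omega eta s0) \<inter> lmul xi2 (Omega eta s) \<noteq> {} \<longrightarrow>
       xi1 = xi2 \<and> g \<in> {xi1 ** v ** m ** matrix_inv xi1 | v m. v \<in> LN \<and> m \<in> LM}"
    and g: "g \<in> Gamma" "xi \<in> Xi" "g ** xi \<notin> LP"
      "m \<in> LM" "g ** xi = uu x1 ** sg ** m ** LA r ** uu y"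
  shows "- (s + s0) < r"
proof (rule ccontr)
  assume "\<not> - (s + s0) < r"
  then have T: "s \<le> - (r + s0)" by simp
  have inv1: "matrix_inv (mat 1 :: 'k lmat) = mat 1" by (rule matrix_inv_eq) simp
  have "uu (- y) \<in> LN" "uu x1 \<in> LN" by (simp_all add: LN_def)
  then obtain dl v where dl: "dl \<in> Gamma" "dl \<in> {xi ** u ** matrix_inv xi | u. u \<in> LN}"
    and v: "v \<in> eta" and dlv: "xi ** uu (- y) = dl ** xi ** v"
    and "\<exists>d0\<in>Gamma. \<exists>c\<in>eta. d0 \<in> {mat 1 ** u ** matrix_inv (mat 1) | u. u \<in> LN}
      \<and> mat 1 ** uu x1 = d0 ** mat 1 ** c"
    using cover g(2) Xi by meson
  then obtain d0 c where d0: "d0 \<in> Gamma" "d0 \<in> LN" and c: "c \<in> eta" and d0c: "uu x1 = d0 ** c"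
    by (auto simp: inv1)
  have d0_inv: "matrix_inv d0 ** d0 = mat 1" using d0(1) Gamma(1) LSO_inverse by blast
  (* Z lies in a \<Gamma>-translate of \<Omega>(\<eta>, s0) and, r being very negative, in \<Omega>(\<eta>, s). *)
  define Z where "Z = matrix_inv d0 ** (g ** xi ** uu (- y) ** LA s0)"
  define g2 where "g2 = matrix_inv d0 ** g ** dl"
  have "Z = matrix_inv d0 ** g ** (xi ** uu (- y)) ** LA s0"
    by (simp add: Z_def matrix_mul_assoc)
  also have "\<dots> = (g2 ** xi) ** (v ** LA s0 ** mat 1)"
    by (simp add: dlv g2_def matrix_mul_assoc)
  finally have in1: "Z \<in> lmul (g2 ** xi) (Omega eta s0)"
    unfolding lmul_def Omega_def using v mat_1_in_LK by blast
  have "Z = c ** LA (- (r + s0)) ** (sg ** m)"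
    unfolding Z_def using bruhat_translate_eq[OF sg(2) g(4,5) d0c d0_inv] .
  then have in2: "Z \<in> lmul (mat 1) (Omega eta s)"
    unfolding lmul_def Omega_def using c T sg(1) g(4) LM_subset_LK by (auto intro!: LK_mult)
  have "g2 \<in> Gamma" unfolding g2_def using d0(1) g(1) dl(1) by (intro Gamma)
  then have "xi = mat 1 \<and> g2 \<in> {xi ** v ** m ** matrix_inv xi | v m. v \<in> LN \<and> m \<in> LM}"
    using separated g(2) Xi in1 in2 by blast
  then obtain v' m' where xi1: "xi = mat 1" and v'm': "v' \<in> LN" "m' \<in> LM" "g2 = v' ** m'"
    by (auto simp: inv1)
  moreover have "g ** dl = d0 ** g2"
    using d0(1) Gamma(1) LSO_inverse(1)[of d0]
    by (auto simp: g2_def matrix_mul_assoc[symmetric] matrix_mul_cancel_left)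
  then have "g ** dl = d0 ** v' ** m'" by (simp add: v'm'(3) matrix_mul_assoc)
  ultimately have "g \<in> LP"
    using dl(2) d0(2) v'm'(1,2) g(1) Gamma(1) by (intro LP_if_N_NM_N[of g dl d0 v' m']) (auto simp: inv1)
  with g(3) xi1 show False by simp
qed

lemma Gamma_cusp_height_lower_bound:
  fixes Gamma Xi eta0 :: "'k::finite lmat set" and s0 :: real and sg :: "'k lmat"
  assumes sg: "sg \<in> LK" "\<And>t. sg ** LA t = LA (- t) ** sg"
    and Gamma: "Gamma \<subseteq> LG" "\<And>g h. g \<in> Gamma \<Longrightarrow> h \<in> Gamma \<Longrightarrow> g ** h \<in> Gamma"
      "\<And>g. g \<in> Gamma \<Longrightarrow> matrix_inv g \<in> Gamma"
    and Xi: "finite Xi" "mat 1 \<in> Xi" "Xi \<subseteq> LG" and eta0: "compact eta0" "eta0 \<subseteq> LN"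
    and cond_ii: "\<And>xi. xi \<in> Xi \<Longrightarrow> \<exists>C. compact C
        \<and> C \<subseteq> {xi ** v ** matrix_inv xi | v. v \<in> LN}
        \<and> {xi ** v ** matrix_inv xi | v. v \<in> LN}
            \<subseteq> {g ** c | g c. g \<in> Gamma \<inter> {xi ** v ** matrix_inv xi | v. v \<in> LN} \<and> c \<in> C}"
    and cond_iv: "\<And>eta. compact eta \<Longrightarrow> eta0 \<subseteq> eta \<Longrightarrow> eta \<subseteq> LN \<Longrightarrow>
        \<exists>s>s0. \<forall>g\<in>Gamma. \<forall>xi1\<in>Xi. \<forall>xi2\<in>Xi.
          lmul (g ** xi1) (Omega eta s0) \<inter> lmul xi2 (Omega eta s) \<noteq> {} \<longrightarrow>
          xi1 = xi2 \<and> g \<in> {xi1 ** v ** m ** matrix_inv xi1 | v m. v \<in> LN \<and> m \<in> LM}"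
  shows "\<exists>H>0. \<forall>g\<in>Gamma. \<forall>xi\<in>Xi. g ** xi \<notin> LP \<longrightarrow> H \<le> height sg (g ** xi)"
proof -
  have Gamma_LSO: "Gamma \<subseteq> LSO" using Gamma(1) LG_subset_LSO by blast
  have sg_nu: "sg *v nu = en - e0" and sg_LSO: "sg \<in> LSO"
    using involution_nu[OF sg] sg(1) LK_subset_LG LG_subset_LSO by blast+
  obtain eta where eta: "compact eta" "eta0 \<subseteq> eta" "eta \<subseteq> LN"
    and cover: "\<forall>xi\<in>Xi. \<forall>v\<in>LN. \<exists>dl\<in>Gamma. \<exists>w\<in>eta.
       dl \<in> {xi ** u ** matrix_inv xi | u. u \<in> LN} \<and> xi ** v = dl ** xi ** w"
    using conj_LN_fundamental_set[OF Xi(1) _ eta0 cond_ii] Xi(3) LG_subset_LSO by blast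
  obtain s where separated: "\<forall>g\<in>Gamma. \<forall>xi1\<in>Xi. \<forall>xi2\<in>Xi.
       lmul (g ** xi1) (Omega eta s0) \<inter> lmul xi2 (Omega eta s) \<noteq> {} \<longrightarrow>
       xi1 = xi2 \<and> g \<in> {xi1 ** v ** m ** matrix_inv xi1 | v m. v \<in> LN \<and> m \<in> LM}"
    using cond_iv[OF eta] by blast
  have "exp (- (s + s0)) \<le> height sg (g ** xi)"
    if g: "g \<in> Gamma" "xi \<in> Xi" "g ** xi \<notin> LP" for g xi
  proof -
    obtain x1 m r y where m: "m \<in> LM" and gxi: "g ** xi = uu x1 ** sg ** m ** LA r ** uu y"
      using bruhat_decomposition[OF sg_nu sg_LSO LG_mult g(3)] g Gamma(1) Xi(3) by blast
    have "- (s + s0) < r"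
      using bruhat_exponent_lower_bound[OF sg Gamma_LSO Gamma(2,3) Xi(2) cover separated g m gxi] .
    then show ?thesis using bdry_height(2)[OF sg_nu m gxi] by simp
  qed
  then show ?thesis by (intro exI[of _ "exp (- (s + s0))"]) auto
qed

theorem proposition3p3:
  fixes Gamma Xi eta0 :: "'k::finite lmat set"
    and s0 s1 :: real and sg :: "'k lmat"
  assumes sg: "sg \<in> LK" "sg ** sg = mat 1"
      "\<And>t. sg ** LA t ** matrix_inv sg = LA (- t)"
    and Gamma_sub: "Gamma \<subseteq> LG"
    and Gamma_one: "mat 1 \<in> Gamma"
    and Gamma_mult: "\<And>g h. g \<in> Gamma \<Longrightarrow> h \<in> Gamma \<Longrightarrow> g ** h \<in> Gamma"
    and Gamma_inv: "\<And>g. g \<in> Gamma \<Longrightarrow> matrix_inv g \<in> Gamma"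
    and Gamma_discrete: "\<exists>e>0. \<forall>g\<in>Gamma. g \<noteq> mat 1 \<longrightarrow> e \<le> norm (g - mat 1)"
    and Gamma_noncocompact: "\<not> (\<exists>C. compact C \<and> LG \<subseteq> {g ** c | g c. g \<in> Gamma \<and> c \<in> C})"
    and s0: "s0 > 0"
    and eta0: "compact eta0" "eta0 \<subseteq> LN"
    and Xi: "finite Xi" "mat 1 \<in> Xi" "Xi \<subseteq> LG"
    and cond_i: "LG = {g ** xi ** w | g xi w. g \<in> Gamma \<and> xi \<in> Xi \<and> w \<in> Omega eta0 s0}"
    and cond_ii: "\<And>xi. xi \<in> Xi \<Longrightarrow> \<exists>C. compact C
        \<and> C \<subseteq> {xi ** v ** matrix_inv xi | v. v \<in> LN}
        \<and> {xi ** v ** matrix_inv xi | v. v \<in> LN}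
            \<subseteq> {g ** c | g c. g \<in> Gamma \<inter> {xi ** v ** matrix_inv xi | v. v \<in> LN} \<and> c \<in> C}"
    and cond_iii: "\<And>eta. compact eta \<Longrightarrow> eta \<subseteq> LN \<Longrightarrow>
        finite {g \<in> Gamma. \<exists>xi\<in>Xi. lmul (g ** xi) (Omega eta s0) \<inter> Omega eta s0 \<noteq> {}}"
    and cond_iv: "\<And>eta. compact eta \<Longrightarrow> eta0 \<subseteq> eta \<Longrightarrow> eta \<subseteq> LN \<Longrightarrow>
        \<exists>s>s0. \<forall>g\<in>Gamma. \<forall>xi1\<in>Xi. \<forall>xi2\<in>Xi.
          lmul (g ** xi1) (Omega eta s0) \<inter> lmul xi2 (Omega eta s) \<noteq> {} \<longrightarrow>
          xi1 = xi2 \<and> g \<in> {xi1 ** v ** m ** matrix_inv xi1 | v m. v \<in> LN \<and> m \<in> LM}"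
    and s1: "s1 > s0"
    and s1_iv: "\<forall>g\<in>Gamma. \<forall>xi1\<in>Xi. \<forall>xi2\<in>Xi.
          lmul (g ** xi1) (Omega eta0 s0) \<inter> lmul xi2 (Omega eta0 s1) \<noteq> {} \<longrightarrow>
          xi1 = xi2 \<and> g \<in> {xi1 ** v ** m ** matrix_inv xi1 | v m. v \<in> LN \<and> m \<in> LM}"
  shows "\<exists>c>0. \<exists>c'>0. \<forall>x g xi. g \<in> Gamma \<longrightarrow> xi \<in> Xi \<longrightarrow> g ** xi \<notin> LP \<longrightarrow>
      (norm (x - bdry sg (g ** xi)) \<le> c / height sg (g ** xi)
         \<longrightarrow> enters sg x (g ** xi) s0)
    \<and> (norm (x - bdry sg (g ** xi)) \<le> c' / height sg (g ** xi)
         \<longrightarrow> enters sg x (g ** xi) s1)"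
proof -
  have sg_LA: "\<And>t. sg ** LA t = LA (- t) ** sg" using LA_conj_by_involution[OF sg(2,3)] .
  obtain H where H: "H > 0"
    and H_height: "\<forall>g\<in>Gamma. \<forall>xi\<in>Xi. g ** xi \<notin> LP \<longrightarrow> H \<le> height sg (g ** xi)"
    using Gamma_cusp_height_lower_bound[OF sg(1) sg_LA Gamma_sub Gamma_mult Gamma_inv
        Xi eta0 cond_ii cond_iv] by blast
  define D where "D = max 2 (1 / H)"
  have D: "2 \<le> D" by (simp add: D_def)
  have near: "norm (x - bdry sg (g ** xi)) \<le> exp (- s) / (2 * D) / height sg (g ** xi)
      \<longrightarrow> enters sg x (g ** xi) s"
    if g: "g \<in> Gamma" "xi \<in> Xi" "g ** xi \<notin> LP" and s: "0 \<le> s" for x g xi s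
  proof -
    have gxi: "g ** xi \<in> LG" using g Gamma_sub Xi(3) LG_mult by blast
    obtain x1 m r y where m: "m \<in> LM" and gxi_eq: "g ** xi = uu x1 ** sg ** m ** LA r ** uu y"
      using bruhat_decomposition[OF involution_nu[OF sg(1) sg_LA] _ gxi g(3)]
        sg(1) LK_subset_LG LG_subset_LSO by blast
    note bh = bdry_height[OF involution_nu[OF sg(1) sg_LA] m gxi_eq]
    have "H \<le> height sg (g ** xi)" using H_height g by blast
    then have "H \<le> exp r" by (simp only: bh(2))
    then have "exp (- r) \<le> 1 / H" using H by (simp add: exp_minus field_simps)
    then have "exp (- r) \<le> D" by (simp add: D_def)
    then show ?thesis
      using enters_if_near_cusp[OF sg(1) sg_LA _ m gxi_eq D _ s] gxi LG_subset_LSO bh by auto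
  qed
  moreover have "exp (- s0) / (2 * D) > 0" "exp (- s1) / (2 * D) > 0" using D by simp_all
  ultimately show ?thesis using s0 s1 by (meson less_imp_le order.strict_trans)
qed

end
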